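(* Let $\lambda_1,\lambda_2>0$ and $\nu\in(0,1)$. Define, for $\theta\in\mathbb{R}$, $$\Psi^{(1)}_{\nu,\underline{\lambda}}(\theta):=\begin{cases}(\lambda_1(e^\theta-1))^{1/\nu} & \text{if } \theta\geq0,\\ (\lambda_2(e^{-\theta}-1))^{1/\nu} & \text{if } \theta<0,\end{cases}$$ $$\Psi^{(2)}_{\nu,\underline{\lambda}}(\theta):=\begin{cases}(\lambda_1(e^\theta-1)+\lambda_2(e^{-\theta}-1))^{1/\nu} & \text{if } \lambda_1(e^\theta-1)+\lambda_2(e^{-\theta}-1)\geq0,\\ 0 & \text{otherwise},\end{cases}$$ and for $k\in\{1,2\}$ let $I^{(k)}_{\mathrm{LD}}(x):=\sup_{\theta\in\mathbb{R}}\{\theta x-\Psi^{(k)}_{\nu,\underline{\lambda}}(\theta)\}$. Then $I^{(1)}_{\mathrm{LD}}(0)=I^{(2)}_{\mathrm{LD}}(0)=0$ and, for every $x\neq0$, $I^{(2)}_{\mathrm{LD}}(x)>I^{(1)}_{\mathrm{LD}}(x)>0$.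
   Context: In the paper, $I^{(1)}_{\mathrm{LD}}$ is the large deviation rate function (speed $t$) of $Y(t)/t$, where $Y(t)=N_{\nu,\lambda_1}(t)-N_{\nu,\lambda_2}(t)$ is a difference of two independent fractional Poisson processes with the same $\nu$, and $I^{(2)}_{\mathrm{LD}}$ is the rate function of $Z(t)/t$, where $Z(t)=S(L_\nu(t))$ with $S$ a difference of two independent Poisson processes with intensities $\lambda_1,\lambda_2$ and $L_\nu$ an independent inverse $\nu$-stable subordinator. The claim concerns only the functions defined explicitly above. *)

theory Defs
  imports "HOL-Analysis.Analysis"
begin

definition Psi1 :: "real \<Rightarrow> real \<Rightarrow> real \<Rightarrow> real \<Rightarrow> real" where
  "Psi1 \<nu> l1 l2 \<theta> =
     (if \<theta> \<ge> 0 then (l1 * (exp \<theta> - 1)) powr (1 / \<nu>)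
      else (l2 * (exp (-\<theta>) - 1)) powr (1 / \<nu>))"

definition Psi2 :: "real \<Rightarrow> real \<Rightarrow> real \<Rightarrow> real \<Rightarrow> real" where
  "Psi2 \<nu> l1 l2 \<theta> =
     (let g = l1 * (exp \<theta> - 1) + l2 * (exp (-\<theta>) - 1)
      in if g \<ge> 0 then g powr (1 / \<nu>) else 0)"

definition I_LD :: "(real \<Rightarrow> real) \<Rightarrow> real \<Rightarrow> ereal" where
  "I_LD \<Psi> x = (SUP \<theta>\<in>(UNIV::real set). ereal (\<theta> * x - \<Psi> \<theta>))"

end

theory Submission
  imports Defs "HOL-Real_Asymp.Real_Asymp"
begin

(* Both Psi functions are nonnegative and vanish at 0, so both transforms vanish at 0.
   The reflection t \<mapsto> -t swaps l1 and l2 in both Psi functions, which reduces the case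
   x < 0 to x > 0. For x > 0, Psi1 is o(t) at 0+ (as 1/\<nu> > 1) and grows exponentially at
   +\<infinity>, so \<theta> x - Psi1 \<theta> attains a positive maximum at some \<theta>* > 0. Since Psi2 < Psi1
   on (0, \<infinity>), already \<theta>* x - Psi2 \<theta>* exceeds that maximum. *)

lemma I_LD_ge: "ereal (t * x - \<Psi> t) \<le> I_LD \<Psi> x"
  unfolding I_LD_def by (rule SUP_upper) simp

lemma I_LD_eq_max:
  assumes "\<And>t. t * x - \<Psi> t \<le> s * x - \<Psi> s"
  shows "I_LD \<Psi> x = ereal (s * x - \<Psi> s)"
proof (rule antisym)
  show "I_LD \<Psi> x \<le> ereal (s * x - \<Psi> s)"
    unfolding I_LD_def by (rule SUP_least) (simp add: assms)
qed (rule I_LD_ge)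

lemma I_LD_at_0_eq_0:
  assumes "\<And>t. \<Psi> t \<ge> 0" and "\<Psi> 0 = 0"
  shows "I_LD \<Psi> 0 = 0"
  using I_LD_eq_max[of 0 \<Psi> 0] assms by (simp add: zero_ereal_def)

lemma I_LD_reflect:
  assumes "\<And>t. \<Psi> (-t) = \<Phi> t"
  shows "I_LD \<Psi> (-x) = I_LD \<Phi> x"
proof -
  have "I_LD \<Psi> (-x) = (SUP t\<in>uminus ` UNIV. ereal (t * (-x) - \<Psi> t))"
    unfolding I_LD_def by (simp add: surj_def exI[of _ "- _"])
  also have "\<dots> = I_LD \<Phi> x"
    unfolding I_LD_def image_image using assms by simp
  finally show ?thesis .
qed

lemma I_LD_less_I_LD:
  assumes "\<And>t. t * x - \<Psi> t \<le> s * x - \<Psi> s" and "\<Phi> s < \<Psi> s"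
  shows "I_LD \<Psi> x < I_LD \<Phi> x"
proof -
  have "I_LD \<Psi> x = ereal (s * x - \<Psi> s)" using assms(1) by (rule I_LD_eq_max)
  also have "\<dots> < ereal (s * x - \<Phi> s)" using assms(2) by simp
  also have "\<dots> \<le> I_LD \<Phi> x" by (rule I_LD_ge)
  finally show ?thesis .
qed

lemma continuous_attains_positive_sup:
  fixes f :: "real \<Rightarrow> real"
  assumes pos: "f a > 0"
    and cont: "continuous_on {0..} f"
    and neg_left: "\<And>t. t < 0 \<Longrightarrow> f t \<le> 0"
    and neg_at_top: "eventually (\<lambda>t. f t \<le> 0) at_top"
  obtains s where "f s > 0" and "\<And>t. f t \<le> f s"
proof -
  obtain M where M: "\<And>t. t \<ge> M \<Longrightarrow> f t \<le> 0"
    using neg_at_top by (auto simp: eventually_at_top_linorder)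
  have "a \<in> {0..M}" using pos neg_left[of a] M[of a] by force
  moreover have "continuous_on {0..M} f" using cont by (rule continuous_on_subset) auto
  ultimately have "\<exists>s\<in>{0..M}. \<forall>t\<in>{0..M}. f t \<le> f s"
    by (intro continuous_attains_sup) auto
  then obtain s where s_max: "\<And>t. t \<in> {0..M} \<Longrightarrow> f t \<le> f s" by blast
  have "f s > 0" using s_max[OF \<open>a \<in> {0..M}\<close>] pos by linarith
  moreover have "f t \<le> f s" for t
    using s_max[of t] neg_left[of t] M[of t] \<open>f s > 0\<close> by force
  ultimately show thesis by (rule that)
qed

lemma Psi1_nonneg [simp]: "Psi1 \<nu> l1 l2 t \<ge> 0"
  unfolding Psi1_def by simp

lemma Psi2_nonneg [simp]: "Psi2 \<nu> l1 l2 t \<ge> 0"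
  unfolding Psi2_def Let_def by simp

lemma Psi1_0 [simp]: "Psi1 \<nu> l1 l2 0 = 0"
  unfolding Psi1_def by simp

lemma Psi2_0 [simp]: "Psi2 \<nu> l1 l2 0 = 0"
  unfolding Psi2_def Let_def by simp

lemma Psi1_reflect: "Psi1 \<nu> l1 l2 (-t) = Psi1 \<nu> l2 l1 t"
  unfolding Psi1_def by auto

lemma Psi2_reflect: "Psi2 \<nu> l1 l2 (-t) = Psi2 \<nu> l2 l1 t"
  unfolding Psi2_def Let_def by (simp add: add.commute)

lemma Psi1_of_nonneg: "t \<ge> 0 \<Longrightarrow> Psi1 \<nu> l1 l2 t = (l1 * (exp t - 1)) powr (1 / \<nu>)"
  unfolding Psi1_def by simp

lemma Psi2_less_Psi1:
  assumes "l1 > 0" and "l2 > 0" and "\<nu> > 0" and "t > 0"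
  shows "Psi2 \<nu> l1 l2 t < Psi1 \<nu> l1 l2 t"
proof -
  define a where "a = l1 * (exp t - 1)"
  define g where "g = a + l2 * (exp (-t) - 1)"
  have "a > 0" using assms by (simp add: a_def)
  have "g < a" using assms by (simp add: g_def mult_less_0_iff)
  have "Psi2 \<nu> l1 l2 t = (if g \<ge> 0 then g powr (1 / \<nu>) else 0)"
    unfolding Psi2_def Let_def g_def a_def ..
  also have "\<dots> < a powr (1 / \<nu>)"
    using \<open>a > 0\<close> \<open>g < a\<close> \<open>\<nu> > 0\<close> by (simp add: powr_less_mono2)
  also have "\<dots> = Psi1 \<nu> l1 l2 t"
    using \<open>t > 0\<close> by (simp add: Psi1_of_nonneg a_def)
  finally show ?thesis .
qed

lemma continuous_on_Psi1: "\<nu> > 0 \<Longrightarrow> l1 \<ge> 0 \<Longrightarrow> continuous_on {0..} (Psi1 \<nu> l1 l2)"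
  by (subst continuous_on_cong[OF refl Psi1_of_nonneg])
     (auto intro!: continuous_intros continuous_on_powr')

lemma Psi1_o_t_at_0:
  assumes "l1 > 0" and "0 < \<nu>" and "\<nu> < 1"
  shows "((\<lambda>t. Psi1 \<nu> l1 l2 t / t) \<longlongrightarrow> 0) (at_right 0)"
proof -
  have "1 / \<nu> > 1" using assms by simp
  then have "((\<lambda>t. (l1 * (exp t - 1)) powr (1 / \<nu>) / t) \<longlongrightarrow> 0) (at_right 0)"
    using \<open>l1 > 0\<close> by real_asymp
  moreover have "eventually (\<lambda>t. (l1 * (exp t - 1)) powr (1 / \<nu>) / t = Psi1 \<nu> l1 l2 t / t)
      (at_right 0)"
    using eventually_at_right_less[of 0] by (rule eventually_mono) (simp add: Psi1_of_nonneg)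
  ultimately show ?thesis by (rule Lim_transform_eventually)
qed

lemma Psi1_superlinear:
  assumes "l1 > 0" and "\<nu> > 0"
  shows "filterlim (\<lambda>t. Psi1 \<nu> l1 l2 t - t * x) at_top at_top"
proof -
  have "1 / \<nu> > 0" using assms by simp
  then have "filterlim (\<lambda>t. (l1 * (exp t - 1)) powr (1 / \<nu>) - t * x) at_top at_top"
    using \<open>l1 > 0\<close> by real_asymp
  moreover have "eventually (\<lambda>t. (l1 * (exp t - 1)) powr (1 / \<nu>) - t * x =
      Psi1 \<nu> l1 l2 t - t * x) at_top"
    using eventually_ge_at_top[of 0] by (rule eventually_mono) (simp add: Psi1_of_nonneg)
  ultimately show ?thesis by (rule filterlim_mono_eventually[OF _ order_refl order_refl])
qed

lemma I_LD_Psi1_pos_less_I_LD_Psi2: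
  assumes "l1 > 0" and "l2 > 0" and "0 < \<nu>" and "\<nu> < 1" and "x > 0"
  shows "0 < I_LD (Psi1 \<nu> l1 l2) x \<and> I_LD (Psi1 \<nu> l1 l2) x < I_LD (Psi2 \<nu> l1 l2) x"
proof -
  define f where "f t = t * x - Psi1 \<nu> l1 l2 t" for t
  have "eventually (\<lambda>t. 0 < t \<and> Psi1 \<nu> l1 l2 t / t < x) (at_right 0)"
    using eventually_at_right_less[of 0] order_tendstoD(2)[OF Psi1_o_t_at_0 \<open>x > 0\<close>] assms
    by (simp add: eventually_conj_iff)
  then obtain a where "0 < a" "Psi1 \<nu> l1 l2 a / a < x"
    using eventually_happens'[OF trivial_limit_at_right_real] by blast
  then have "f a > 0" by (simp add: f_def field_simps)
  moreover have "continuous_on {0..} f"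
    unfolding f_def using assms by (intro continuous_intros continuous_on_Psi1) auto
  moreover have "f t \<le> 0" if "t < 0" for t
    using mult_neg_pos[OF that \<open>x > 0\<close>] Psi1_nonneg[of \<nu> l1 l2 t] unfolding f_def by linarith
  moreover have "eventually (\<lambda>t. f t \<le> 0) at_top"
  proof -
    have "eventually (\<lambda>t. 0 \<le> Psi1 \<nu> l1 l2 t - t * x) at_top"
      using Psi1_superlinear[OF \<open>l1 > 0\<close> \<open>\<nu> > 0\<close>] unfolding filterlim_at_top by blast
    then show ?thesis by (rule eventually_mono) (simp add: f_def)
  qed
  ultimately obtain s where s_pos: "f s > 0" and s_max: "\<And>t. f t \<le> f s"
    by (metis continuous_attains_positive_sup)
  have "s > 0"
  proof (rule ccontr)
    assume "\<not> s > 0"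
    then have "s * x \<le> 0" using \<open>x > 0\<close> by (simp add: mult_nonpos_nonneg)
    then show False using s_pos Psi1_nonneg[of \<nu> l1 l2 s] by (simp add: f_def)
  qed
  have "I_LD (Psi1 \<nu> l1 l2) x = ereal (f s)"
    unfolding f_def using s_max by (intro I_LD_eq_max) (simp add: f_def)
  moreover have "I_LD (Psi1 \<nu> l1 l2) x < I_LD (Psi2 \<nu> l1 l2) x"
    using s_max Psi2_less_Psi1[OF assms(1-3) \<open>s > 0\<close>]
    by (intro I_LD_less_I_LD) (simp_all add: f_def)
  ultimately show ?thesis using s_pos by simp
qed

theorem proposition5p2:
  fixes l1 l2 \<nu> :: real
  assumes "l1 > 0" and "l2 > 0" and "0 < \<nu>" and "\<nu> < 1"
  shows "I_LD (Psi1 \<nu> l1 l2) 0 = 0 \<and> I_LD (Psi2 \<nu> l1 l2) 0 = 0 \<and>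
         (\<forall>x::real. x \<noteq> 0 \<longrightarrow>
            I_LD (Psi2 \<nu> l1 l2) x > I_LD (Psi1 \<nu> l1 l2) x \<and> I_LD (Psi1 \<nu> l1 l2) x > 0)"
proof (intro conjI allI impI)
  show "I_LD (Psi1 \<nu> l1 l2) 0 = 0" "I_LD (Psi2 \<nu> l1 l2) 0 = 0"
    by (simp_all add: I_LD_at_0_eq_0)
  fix x :: real
  assume "x \<noteq> 0"
  have "0 < I_LD (Psi1 \<nu> l1 l2) x \<and> I_LD (Psi1 \<nu> l1 l2) x < I_LD (Psi2 \<nu> l1 l2) x"
  proof (cases "x > 0")
    case True
    then show ?thesis by (rule I_LD_Psi1_pos_less_I_LD_Psi2[OF assms])
  next
    case False
    then have "-x > 0" using \<open>x \<noteq> 0\<close> by simp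
    with assms have "0 < I_LD (Psi1 \<nu> l2 l1) (-x) \<and>
        I_LD (Psi1 \<nu> l2 l1) (-x) < I_LD (Psi2 \<nu> l2 l1) (-x)"
      by (intro I_LD_Psi1_pos_less_I_LD_Psi2)
    moreover have "I_LD (Psi1 \<nu> l2 l1) (-x) = I_LD (Psi1 \<nu> l1 l2) x"
      by (rule I_LD_reflect) (rule Psi1_reflect)
    moreover have "I_LD (Psi2 \<nu> l2 l1) (-x) = I_LD (Psi2 \<nu> l1 l2) x"
      by (rule I_LD_reflect) (rule Psi2_reflect)
    ultimately show ?thesis by simp
  qed
  then show "I_LD (Psi2 \<nu> l1 l2) x > I_LD (Psi1 \<nu> l1 l2) x" "I_LD (Psi1 \<nu> l1 l2) x > 0"
    by auto
qed

end
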